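(* Let $T$ be a complete theory with monster model $\mathfrak{C}$. Suppose there are a formula $\phi(x,y)$ and a strongly indiscernible tree $(a_\eta)_{\eta\in 2^{<\omega}}$ in $\mathfrak{C}$ such that the set $\{\phi(x,a_{0^n}):n<\omega\}$ has infinitely many realizations in $\mathfrak{C}$, while the formula $\phi(x,a_{\langle 0\rangle})\wedge\phi(x,a_{\langle 1\rangle})$ has only finitely many realizations in $\mathfrak{C}$. Then $T$ has SOP$_2$.
   Context: Here $0^n\in 2^{<\omega}$ denotes the sequence of $n$ zeros, and $\langle 0\rangle,\langle 1\rangle$ are the sequences of length one. Let $\mathcal{L}_0=\{\triangleleft,<_{lex},\wedge\}$ and view $2^{<\omega}$ as an $\mathcal{L}_0$-structure with $\triangleleft$ the prefix (initial segment) order, $<_{lex}$ the lexicographic order, and $\wedge$ the meet (longest common initial segment). A tree $(a_\eta)_{\eta\in S}$ is strongly indiscernible (over $C$) if whenever $\mathrm{qftp}_{\mathcal{L}_0}(\eta_0,\dots,\eta_{n-1})=\mathrm{qftp}_{\mathcal{L}_0}(\nu_0,\dots,\nu_{n-1})$ we have $\mathrm{tp}(a_{\eta_0},\dots,a_{\eta_{n-1}}/C)=\mathrm{tp}(a_{\nu_0},\dots,a_{\nu_{n-1}}/C)$. A formula $\phi(x;y)$ has SOP$_2$ if there are tuples $(b_\eta)_{\eta\in 2^{<\omega}}$ such that for every $\xi\in 2^\omega$ the set $\{\phi(x,b_{\xi|n}):n<\omega\}$ is consistent, and for every pair of $\triangleleft$-incomparable $\eta,\nu$ the formula $\phi(x,b_\eta)\wedge\phi(x,b_\nu)$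 is inconsistent; $T$ has SOP$_2$ if some formula does. *)

theory Defs
  imports Main "HOL-Library.Sublist"
begin

text \<open>Terms and formulas of a first-order language with function symbols of type 'f
and relation symbols of type 'r (symbols may be applied to argument lists; a symbol used
at different arities is treated as distinct symbols of those arities).\<close>

datatype 'f trm = Var nat | Fn 'f "'f trm list"

datatype ('f, 'r) fm =
    FEq "'f trm" "'f trm"
  | FRel 'r "'f trm list"
  | FNeg "('f, 'r) fm"
  | FConj "('f, 'r) fm" "('f, 'r) fm"
  | FEx nat "('f, 'r) fm"

primrec fvt :: "'f trm \<Rightarrow> nat set" where
  "fvt (Var n) = {n}"
| "fvt (Fn f ts) = \<Union> (set (map fvt ts))"

primrec fv :: "('f, 'r) fm \<Rightarrow> nat set" where
  "fv (FEq s t) = fvt s \<union> fvt t"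
| "fv (FRel r ts) = \<Union> (set (map fvt ts))"
| "fv (FNeg \<phi>) = fv \<phi>"
| "fv (FConj \<phi> \<psi>) = fv \<phi> \<union> fv \<psi>"
| "fv (FEx v \<phi>) = fv \<phi> - {v}"

text \<open>A structure with universe the type 'a: interpretations F of function symbols and
R of relation symbols.\<close>

primrec evalt :: "('f \<Rightarrow> 'a list \<Rightarrow> 'a) \<Rightarrow> (nat \<Rightarrow> 'a) \<Rightarrow> 'f trm \<Rightarrow> 'a" where
  "evalt F e (Var n) = e n"
| "evalt F e (Fn f ts) = F f (map (evalt F e) ts)"

primrec sat :: "('f \<Rightarrow> 'a list \<Rightarrow> 'a) \<Rightarrow> ('r \<Rightarrow> 'a list \<Rightarrow> bool) \<Rightarrow> (nat \<Rightarrow> 'a)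
                 \<Rightarrow> ('f, 'r) fm \<Rightarrow> bool" where
  "sat F R e (FEq s t) = (evalt F e s = evalt F e t)"
| "sat F R e (FRel r ts) = R r (map (evalt F e) ts)"
| "sat F R e (FNeg \<phi>) = (\<not> sat F R e \<phi>)"
| "sat F R e (FConj \<phi> \<psi>) = (sat F R e \<phi> \<and> sat F R e \<psi>)"
| "sat F R e (FEx v \<phi>) = (\<exists>a. sat F R (e(v := a)) \<phi>)"

text \<open>Monster-model hypothesis: the structure is |T|^+-saturated, i.e. every set of
formulas in the free variable 0 with parameters (the values of the other variables) from a
set A of size at most |L| + aleph_0 that is finitely satisfiable is realized.\<close>

definition saturated :: "('f \<Rightarrow> 'a list \<Rightarrow> 'a) \<Rightarrow> ('r \<Rightarrow> 'a list \<Rightarrow> bool) \<Rightarrow> bool" where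
  "saturated F R \<longleftrightarrow>
     (\<forall>(A :: 'a set) (\<Sigma> :: (('f, 'r) fm \<times> (nat \<Rightarrow> 'a)) set).
        (\<exists>g :: 'f + 'r + nat \<Rightarrow> 'a. A \<subseteq> range g) \<longrightarrow>
        (\<forall>(\<phi>, e) \<in> \<Sigma>. e ` (UNIV - {0}) \<subseteq> A) \<longrightarrow>
        (\<forall>\<Sigma>0 \<subseteq> \<Sigma>. finite \<Sigma>0 \<longrightarrow> (\<exists>a. \<forall>(\<phi>, e) \<in> \<Sigma>0. sat F R (e(0 := a)) \<phi>)) \<longrightarrow>
        (\<exists>a. \<forall>(\<phi>, e) \<in> \<Sigma>. sat F R (e(0 := a)) \<phi>))"

text \<open>Assignment for \<phi>(x, y) with x := xs (variables 0..<length xs) and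
y := bs (the following variables).\<close>

definition penv :: "'a list \<Rightarrow> 'a list \<Rightarrow> nat \<Rightarrow> 'a" where
  "penv xs bs i = (if i < length xs then xs ! i else bs ! (i - length xs))"

definition same_tp :: "('f \<Rightarrow> 'a list \<Rightarrow> 'a) \<Rightarrow> ('r \<Rightarrow> 'a list \<Rightarrow> bool)
                        \<Rightarrow> 'a list \<Rightarrow> 'a list \<Rightarrow> bool" where
  "same_tp F R as bs \<longleftrightarrow> length as = length bs \<and>
     (\<forall>\<psi> :: ('f, 'r) fm. fv \<psi> \<subseteq> {..<length as} \<longrightarrow>
        (sat F R (\<lambda>i. as ! i) \<psi> \<longleftrightarrow> sat F R (\<lambda>i. bs ! i) \<psi>))"

section \<open>The L_0-structure on 2^{<omega} (bool list, False = 0, True = 1)\<close>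

definition lex_less :: "bool list \<Rightarrow> bool list \<Rightarrow> bool" where
  "lex_less \<eta> \<nu> \<longleftrightarrow> strict_prefix \<eta> \<nu> \<or>
     (\<exists>w u v. \<eta> = w @ False # u \<and> \<nu> = w @ True # v)"

definition meet :: "bool list \<Rightarrow> bool list \<Rightarrow> bool list" where
  "meet \<eta> \<nu> = longest_common_prefix \<eta> \<nu>"

datatype mtrm = MV nat | MMeet mtrm mtrm

primrec meval :: "bool list list \<Rightarrow> mtrm \<Rightarrow> bool list" where
  "meval \<eta>s (MV i) = \<eta>s ! i"
| "meval \<eta>s (MMeet s t) = meet (meval \<eta>s s) (meval \<eta>s t)"

primrec mvars :: "mtrm \<Rightarrow> nat set" where
  "mvars (MV i) = {i}"
| "mvars (MMeet s t) = mvars s \<union> mvars t"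

definition qftp_eq :: "bool list list \<Rightarrow> bool list list \<Rightarrow> bool" where
  "qftp_eq \<eta>s \<nu>s \<longleftrightarrow> length \<eta>s = length \<nu>s \<and>
     (\<forall>s t. mvars s \<union> mvars t \<subseteq> {..<length \<eta>s} \<longrightarrow>
        (meval \<eta>s s = meval \<eta>s t \<longleftrightarrow> meval \<nu>s s = meval \<nu>s t) \<and>
        (strict_prefix (meval \<eta>s s) (meval \<eta>s t) \<longleftrightarrow> strict_prefix (meval \<nu>s s) (meval \<nu>s t)) \<and>
        (lex_less (meval \<eta>s s) (meval \<eta>s t) \<longleftrightarrow> lex_less (meval \<nu>s s) (meval \<nu>s t)))"

definition strongly_indiscernible ::
  "('f \<Rightarrow> 'a list \<Rightarrow> 'a) \<Rightarrow> ('r \<Rightarrow> 'a list \<Rightarrow> bool) \<Rightarrow> (bool list \<Rightarrow> 'a list) \<Rightarrow> bool" where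
  "strongly_indiscernible F R a \<longleftrightarrow>
     (\<forall>\<eta>s \<nu>s. qftp_eq \<eta>s \<nu>s \<longrightarrow> same_tp F R (concat (map a \<eta>s)) (concat (map a \<nu>s)))"

section \<open>SOP_2 (witnessed in the monster model; consistency = finite satisfiability)\<close>

definition has_SOP2 :: "('f \<Rightarrow> 'a list \<Rightarrow> 'a) \<Rightarrow> ('r \<Rightarrow> 'a list \<Rightarrow> bool) \<Rightarrow> bool" where
  "has_SOP2 F R \<longleftrightarrow>
     (\<exists>(\<phi> :: ('f, 'r) fm) (n :: nat) (m :: nat) (b :: bool list \<Rightarrow> 'a list).
        fv \<phi> \<subseteq> {..<n + m} \<and> (\<forall>\<eta>. length (b \<eta>) = m) \<and>
        (\<forall>\<xi> :: nat \<Rightarrow> bool. \<forall>K :: nat set. finite K \<longrightarrow>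
           (\<exists>xs. length xs = n \<and> (\<forall>k\<in>K. sat F R (penv xs (b (map \<xi> [0..<k]))) \<phi>))) \<and>
        (\<forall>\<eta> \<nu>. \<not> prefix \<eta> \<nu> \<and> \<not> prefix \<nu> \<eta> \<longrightarrow>
           \<not> (\<exists>xs. length xs = n \<and> sat F R (penv xs (b \<eta>)) \<phi> \<and> sat F R (penv xs (b \<nu>)) \<phi>)))"

end

theory Submission
  imports Defs "HOL-Library.List_Lexorder"
begin

text \<open>Let \<open>S\<close> be the finite set of common solutions of \<open>\<phi>(x; a\<^bsub>\<langle>0\<rangle>\<^esub>)\<close> and \<open>\<phi>(x; a\<^bsub>\<langle>1\<rangle>\<^esub>)\<close>,
let \<open>p = |S| + 1\<close>, and let \<open>\<psi>(x\<^sub>1 \<dots> x\<^sub>p; y)\<close> say that \<open>x\<^sub>1, \<dots>, x\<^sub>p\<close> are distinct solutions of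
\<open>\<phi>(x; y)\<close>. Any \<open>p\<close> distinct common solutions of all \<open>\<phi>(x; a\<^bsub>0^k\<^esub>)\<close> realize every \<open>\<psi>(x; a\<^bsub>0^k\<^esub>)\<close>.
Finitely many nodes of an arbitrary branch have the same quantifier-free \<open>L\<^sub>0\<close>-type as the
nodes of the same lengths on the branch \<open>0\<^sup>\<omega>\<close>, so by strong indiscernibility the set
\<open>{\<psi>(x; a\<^bsub>\<xi>|k\<^esub>) : k < \<omega>}\<close> is consistent for every branch \<open>\<xi>\<close>. Two incomparable nodes have, up to
order, the quantifier-free type of \<open>\<langle>0\<rangle>, \<langle>1\<rangle>\<close>; hence a common realization of \<open>\<psi>(x; a\<^sub>\<eta>)\<close> and
\<open>\<psi>(x; a\<^sub>\<nu>)\<close> would yield \<open>p\<close> distinct elements of \<open>S\<close>.\<close>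

lemma evalt_cong: "\<forall>i\<in>fvt t. e i = e' i \<Longrightarrow> evalt F e t = evalt F e' t"
  by (induction t) (auto intro!: arg_cong[where f = "F _"])

lemma sat_cong: "\<forall>i\<in>fv \<phi>. e i = e' i \<Longrightarrow> sat F R e \<phi> \<longleftrightarrow> sat F R e' \<phi>"
proof (induction \<phi> arbitrary: e e')
  case (FEq s t)
  then show ?case
    using evalt_cong[of s e e' F] evalt_cong[of t e e' F] by simp
next
  case (FRel r ts)
  have "map (evalt F e) ts = map (evalt F e') ts"
    using FRel by (auto intro!: evalt_cong)
  then show ?case by (simp only: sat.simps)
next
  case (FEx v \<phi>)
  have "\<And>a. sat F R (e(v := a)) \<phi> \<longleftrightarrow> sat F R (e'(v := a)) \<phi>"
    by (rule FEx.IH) (use FEx.prems in auto)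
  then show ?case by simp
next
  case (FConj \<phi>1 \<phi>2)
  have "sat F R e \<phi>1 \<longleftrightarrow> sat F R e' \<phi>1"
    by (rule FConj.IH(1)) (use FConj.prems in auto)
  moreover have "sat F R e \<phi>2 \<longleftrightarrow> sat F R e' \<phi>2"
    by (rule FConj.IH(2)) (use FConj.prems in auto)
  ultimately show ?case by simp
qed auto

primrec rename_trm :: "(nat \<Rightarrow> nat) \<Rightarrow> 'f trm \<Rightarrow> 'f trm" where
  "rename_trm f (Var i) = Var (f i)"
| "rename_trm f (Fn g ts) = Fn g (map (rename_trm f) ts)"

primrec rename_fm :: "(nat \<Rightarrow> nat) \<Rightarrow> ('f, 'r) fm \<Rightarrow> ('f, 'r) fm" where
  "rename_fm f (FEq s t) = FEq (rename_trm f s) (rename_trm f t)"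
| "rename_fm f (FRel r ts) = FRel r (map (rename_trm f) ts)"
| "rename_fm f (FNeg \<phi>) = FNeg (rename_fm f \<phi>)"
| "rename_fm f (FConj \<phi> \<psi>) = FConj (rename_fm f \<phi>) (rename_fm f \<psi>)"
| "rename_fm f (FEx v \<phi>) = FEx (f v) (rename_fm f \<phi>)"

lemma evalt_rename_trm: "evalt F e (rename_trm f t) = evalt F (e \<circ> f) t"
  by (induction t) (auto intro!: arg_cong[where f = "F _"])

lemma fvt_rename_trm: "fvt (rename_trm f t) = f ` fvt t"
  by (induction t) auto

lemma sat_rename_fm: "inj f \<Longrightarrow> sat F R e (rename_fm f \<phi>) \<longleftrightarrow> sat F R (e \<circ> f) \<phi>"
proof (induction \<phi> arbitrary: e)
  case (FEx v \<phi>)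
  then have "\<And>a. e(f v := a) \<circ> f = (e \<circ> f)(v := a)"
    by (auto simp: inj_eq)
  then show ?case by (simp only: rename_fm.simps sat.simps FEx)
qed (auto simp: evalt_rename_trm comp_def)

lemma fv_rename_fm: "fv (rename_fm f \<phi>) \<subseteq> f ` fv \<phi>"
  by (induction \<phi>) (auto simp: fvt_rename_trm)

lemma sat_foldr_FEx:
  "sat F R e (foldr FEx vs \<psi>) \<longleftrightarrow> (\<exists>g. sat F R (\<lambda>i. if i \<in> set vs then g i else e i) \<psi>)"
proof (induction vs arbitrary: e)
  case (Cons v vs)
  have "sat F R e (foldr FEx (v # vs) \<psi>) \<longleftrightarrow>
      (\<exists>c g. sat F R (\<lambda>i. if i \<in> set vs then g i else (e(v := c)) i) \<psi>)"
    by (simp add: Cons)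
  also have "\<dots> \<longleftrightarrow> (\<exists>g. sat F R (\<lambda>i. if i \<in> set (v # vs) then g i else e i) \<psi>)"
  proof
    assume "\<exists>c g. sat F R (\<lambda>i. if i \<in> set vs then g i else (e(v := c)) i) \<psi>"
    then obtain c g where "sat F R (\<lambda>i. if i \<in> set vs then g i else (e(v := c)) i) \<psi>" by blast
    moreover have "(\<lambda>i. if i \<in> set vs then g i else (e(v := c)) i) =
        (\<lambda>i. if i \<in> set (v # vs) then (if i \<in> set vs then g i else c) else e i)" by auto
    ultimately show "\<exists>g. sat F R (\<lambda>i. if i \<in> set (v # vs) then g i else e i) \<psi>" by metis
  next
    assume "\<exists>g. sat F R (\<lambda>i. if i \<in> set (v # vs) then g i else e i) \<psi>"
    then obtain g where "sat F R (\<lambda>i. if i \<in> set (v # vs) then g i else e i) \<psi>" by blast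
    moreover have "(\<lambda>i. if i \<in> set vs then g i else (e(v := g v)) i) =
        (\<lambda>i. if i \<in> set (v # vs) then g i else e i)" by auto
    ultimately show "\<exists>c g. sat F R (\<lambda>i. if i \<in> set vs then g i else (e(v := c)) i) \<psi>" by metis
  qed
  finally show ?case .
qed simp

lemma fv_foldr_FEx: "fv (foldr FEx vs \<psi>) = fv \<psi> - set vs"
  by (induction vs) auto

text \<open>The empty conjunction is the sentence \<open>\<exists>v\<^sub>0. v\<^sub>0 = v\<^sub>0\<close>, so that \<open>Conj\<close> adds no free variables.\<close>

definition Conj :: "('f, 'r) fm list \<Rightarrow> ('f, 'r) fm" where
  "Conj \<phi>s = foldr FConj \<phi>s (FEx 0 (FEq (Var 0) (Var 0)))"

lemma sat_Conj [simp]: "sat F R e (Conj \<phi>s) \<longleftrightarrow> (\<forall>\<phi>\<in>set \<phi>s. sat F R e \<phi>)"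
  unfolding Conj_def by (induction \<phi>s) auto

lemma fv_Conj [simp]: "fv (Conj \<phi>s) = \<Union> (fv ` set \<phi>s)"
  unfolding Conj_def by (induction \<phi>s) auto

text \<open>The formula \<open>\<exists>x. \<theta>(x; y)\<close> with \<open>y\<close> renumbered to the variables \<open>0..<L\<close>.\<close>

definition swap_blocks :: "nat \<Rightarrow> nat \<Rightarrow> nat \<Rightarrow> nat" where
  "swap_blocks L n i = (if i < n then L + i else if i < n + L then i - n else i)"

definition Ex_tuple :: "nat \<Rightarrow> nat \<Rightarrow> ('f, 'r) fm \<Rightarrow> ('f, 'r) fm" where
  "Ex_tuple L n \<theta> = foldr FEx [L..<L + n] (rename_fm (swap_blocks L n) \<theta>)"

lemma inj_swap_blocks: "inj (swap_blocks L n)"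
  unfolding inj_def swap_blocks_def by (auto split: if_splits)

lemma fv_Ex_tuple: "fv \<theta> \<subseteq> {..<n + L} \<Longrightarrow> fv (Ex_tuple L n \<theta>) \<subseteq> {..<L}"
proof -
  assume "fv \<theta> \<subseteq> {..<n + L}"
  then have "fv (rename_fm (swap_blocks L n) \<theta>) \<subseteq> swap_blocks L n ` {..<n + L}"
    using fv_rename_fm by blast
  also have "\<dots> \<subseteq> {..<L} \<union> {L..<L + n}"
    unfolding swap_blocks_def by auto
  finally show ?thesis
    unfolding Ex_tuple_def fv_foldr_FEx by auto
qed

lemma sat_Ex_tuple:
  assumes "fv \<theta> \<subseteq> {..<n + length cs}"
  shows "sat F R (\<lambda>i. cs ! i) (Ex_tuple (length cs) n \<theta>) \<longleftrightarrow>
    (\<exists>xs. length xs = n \<and> sat F R (penv xs cs) \<theta>)"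
proof -
  let ?L = "length cs"
  let ?tuple = "\<lambda>g. map (\<lambda>i. g (?L + i)) [0..<n]"
  have tuple: "sat F R ((\<lambda>i. if i \<in> set [?L..<?L + n] then g i else cs ! i) \<circ> swap_blocks ?L n) \<theta>
      \<longleftrightarrow> sat F R (penv (?tuple g) cs) \<theta>" for g
  proof (rule sat_cong, intro ballI)
    fix i assume "i \<in> fv \<theta>"
    with assms have "i < n + ?L" by auto
    then show "((\<lambda>i. if i \<in> set [?L..<?L + n] then g i else cs ! i) \<circ> swap_blocks ?L n) i =
        penv (?tuple g) cs i"
      by (cases "i < n") (auto simp: swap_blocks_def penv_def)
  qed
  have "sat F R (\<lambda>i. cs ! i) (Ex_tuple ?L n \<theta>) \<longleftrightarrow> (\<exists>g. sat F R (penv (?tuple g) cs) \<theta>)"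
    by (simp only: Ex_tuple_def sat_foldr_FEx sat_rename_fm[OF inj_swap_blocks] tuple)
  also have "\<dots> \<longleftrightarrow> (\<exists>xs. length xs = n \<and> sat F R (penv xs cs) \<theta>)"
  proof
    assume "\<exists>xs. length xs = n \<and> sat F R (penv xs cs) \<theta>"
    then obtain xs where xs: "length xs = n" "sat F R (penv xs cs) \<theta>" by blast
    then have "?tuple (\<lambda>i. xs ! (i - ?L)) = xs"
      using map_nth[of xs] by simp
    with xs(2) show "\<exists>g. sat F R (penv (?tuple g) cs) \<theta>" by (intro exI[of _ "\<lambda>i. xs ! (i - ?L)"]) simp
  next
    assume "\<exists>g. sat F R (penv (?tuple g) cs) \<theta>"
    then obtain g where "sat F R (penv (?tuple g) cs) \<theta>" ..
    then show "\<exists>xs. length xs = n \<and> sat F R (penv xs cs) \<theta>" by (intro exI[of _ "?tuple g"]) simp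
  qed
  finally show ?thesis .
qed

lemma same_tp_realizable:
  assumes "same_tp F R cs ds" "fv \<theta> \<subseteq> {..<n + length cs}"
    and "\<exists>xs. length xs = n \<and> sat F R (penv xs cs) \<theta>"
  shows "\<exists>xs. length xs = n \<and> sat F R (penv xs ds) \<theta>"
proof -
  have "length ds = length cs"
    using assms(1) unfolding same_tp_def by simp
  moreover have "sat F R (\<lambda>i. cs ! i) (Ex_tuple (length cs) n \<theta>)"
    using sat_Ex_tuple[OF assms(2)] assms(3) by blast
  ultimately have "sat F R (\<lambda>i. ds ! i) (Ex_tuple (length ds) n \<theta>)"
    using assms(1) fv_Ex_tuple[OF assms(2)] unfolding same_tp_def by auto
  with assms(2) \<open>length ds = length cs\<close> show ?thesis
    using sat_Ex_tuple[of \<theta> n ds] by simp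
qed

lemma length_concat_const: "\<forall>xs\<in>set xss. length xs = n \<Longrightarrow> length (concat xss) = length xss * n"
  by (induction xss) auto

lemma nth_concat_const:
  assumes "\<forall>xs\<in>set xss. length xs = n" "j < length xss" "i < n"
  shows "concat xss ! (j * n + i) = xss ! j ! i"
  using assms
proof (induction xss arbitrary: j)
  case (Cons xs xss)
  then show ?case
    by (cases j) (auto simp: nth_append length_concat_const algebra_simps)
qed simp

lemma ex_concat_blocks:
  "length xs = p * n \<Longrightarrow> \<exists>xss. xs = concat xss \<and> length xss = p \<and> (\<forall>ys\<in>set xss. length ys = n)"
proof (induction p arbitrary: xs)
  case (Suc p)
  then obtain xss where "drop n xs = concat xss" "length xss = p" "\<forall>ys\<in>set xss. length ys = n"
    by (metis diff_add_inverse length_drop mult_Suc)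
  moreover from this(1) have "xs = take n xs @ concat xss"
    by (metis append_take_drop_id)
  ultimately show ?case
    using Suc.prems by (intro exI[of _ "take n xs # xss"]) auto
qed simp

text \<open>\<open>\<psi>(x; y\<^sub>0) \<and> \<dots> \<and> \<psi>(x; y\<^sub>L\<^sub>-\<^sub>1)\<close>, where the parameter tuples \<open>y\<^sub>t\<close> of length \<open>m\<close> are laid
out one after another behind the \<open>N\<close> variables of \<open>x\<close>.\<close>

definition param_block :: "nat \<Rightarrow> nat \<Rightarrow> nat \<Rightarrow> nat \<Rightarrow> nat" where
  "param_block N m t i = (if i < N then i else i + t * m)"

lemma inj_param_block: "inj (param_block N m t)"
  unfolding inj_def param_block_def by (auto split: if_splits)

definition Conj_params :: "nat \<Rightarrow> nat \<Rightarrow> nat \<Rightarrow> ('f, 'r) fm \<Rightarrow> ('f, 'r) fm" where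
  "Conj_params N m L \<psi> = Conj (map (\<lambda>t. rename_fm (param_block N m t) \<psi>) [0..<L])"

lemma sat_Conj_params:
  assumes "length xs = N" "\<forall>b\<in>set bs. length b = m" "fv \<psi> \<subseteq> {..<N + m}"
  shows "sat F R (penv xs (concat bs)) (Conj_params N m (length bs) \<psi>) \<longleftrightarrow>
    (\<forall>b\<in>set bs. sat F R (penv xs b) \<psi>)"
proof -
  have "sat F R (penv xs (concat bs)) (rename_fm (param_block N m t) \<psi>) \<longleftrightarrow>
      sat F R (penv xs (bs ! t)) \<psi>" if "t < length bs" for t
    unfolding sat_rename_fm[OF inj_param_block]
  proof (rule sat_cong, intro ballI)
    fix i assume "i \<in> fv \<psi>"
    with assms(3) have "i < N + m" by auto
    show "(penv xs (concat bs) \<circ> param_block N m t) i = penv xs (bs ! t) i"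
    proof (cases "i < N")
      case False
      then have "i + t * m - N = t * m + (i - N)" by simp
      with False \<open>i < N + m\<close> assms(1) show ?thesis
        using nth_concat_const[OF assms(2) that, of "i - N"]
        by (simp add: param_block_def penv_def)
    qed (simp add: param_block_def penv_def assms(1))
  qed
  then show ?thesis
    unfolding Conj_params_def by (auto simp: all_set_conv_all_nth)
qed

lemma fv_Conj_params:
  assumes "fv \<psi> \<subseteq> {..<N + m}"
  shows "fv (Conj_params N m L \<psi>) \<subseteq> {..<N + L * m}"
proof -
  have "fv (rename_fm (param_block N m t) \<psi>) \<subseteq> {..<N + L * m}" if "t < L" for t
  proof -
    have "Suc t * m \<le> L * m" using that by (intro mult_le_mono1) simp
    then have "param_block N m t ` {..<N + m} \<subseteq> {..<N + L * m}"
      by (auto simp: param_block_def)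
    then show ?thesis using fv_rename_fm assms by blast
  qed
  then show ?thesis
    unfolding Conj_params_def by (simp add: UN_subset_iff)
qed

section \<open>Quantifier-free types in \<open>2\<^sup><\<^sup>\<omega>\<close>\<close>

lemma lex_less_iff_less: "lex_less u v \<longleftrightarrow> u < v"
proof -
  have "u < v \<longleftrightarrow> ord_class.lexordp u v"
    by (simp add: list_less_def lexordp_conv_lexord)
  also have "\<dots> \<longleftrightarrow> lex_less u v"
  proof -
    have "strict_prefix u v \<longleftrightarrow> (\<exists>x vs. v = u @ x # vs)"
      by (metis append_Nil2 neq_Nil_conv prefix_def strict_prefix_def self_append_conv)
    moreover have "\<And>a b :: bool. a < b \<longleftrightarrow> \<not> a \<and> b" by auto
    ultimately show ?thesis
      unfolding lexordp_iff lex_less_def by blast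
  qed
  finally show ?thesis by simp
qed

lemma strict_prefix_imp_less: "strict_prefix u v \<Longrightarrow> u < (v :: bool list)"
  using lex_less_iff_less lex_less_def by blast

lemma incomparable_lex_less_cases:
  "\<not> prefix \<eta> \<nu> \<Longrightarrow> \<not> prefix \<nu> \<eta> \<Longrightarrow> lex_less \<eta> \<nu> \<or> lex_less \<nu> \<eta>"
  by (metis lex_less_iff_less neq_iff prefix_order.refl)

lemma meet_eq_right: "prefix v u \<Longrightarrow> meet u v = v"
  and meet_eq_left: "prefix u v \<Longrightarrow> meet u v = u"
  unfolding meet_def
  by (metis longest_common_prefix_max_prefix longest_common_prefix_prefix1
      longest_common_prefix_prefix2 prefix_order.antisym prefix_order.refl)+

lemma meet_commute: "meet u v = meet v u"
  unfolding meet_def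
  by (metis longest_common_prefix_max_prefix longest_common_prefix_prefix1
      longest_common_prefix_prefix2 prefix_order.antisym)

lemma prefix_meet1: "prefix (meet u v) u"
  and prefix_meet2: "prefix (meet u v) v"
  unfolding meet_def
  by (rule longest_common_prefix_prefix1, rule longest_common_prefix_prefix2)

lemma prefixes_eq_iff_length:
  "prefix u w \<Longrightarrow> prefix v w \<Longrightarrow> u = v \<longleftrightarrow> length u = length v"
  by (metis prefix_length_prefix order_refl prefix_order.antisym)

lemma prefixes_strict_prefix_iff_length:
  "prefix u w \<Longrightarrow> prefix v w \<Longrightarrow> strict_prefix u v \<longleftrightarrow> length u < length v"
  by (metis prefix_length_prefix prefixes_eq_iff_length linorder_not_le prefix_length_le
      strict_prefix_def order_less_le)

lemma prefixes_lex_less_iff_length: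
  assumes "prefix u w" "prefix v (w :: bool list)"
  shows "lex_less u v \<longleftrightarrow> length u < length v"
proof (cases "length u < length v")
  case False
  with assms have "v = u \<or> strict_prefix v u"
    by (metis prefix_length_prefix not_less prefix_order.le_less)
  then have "\<not> u < v"
    using strict_prefix_imp_less by (metis less_irrefl less_not_sym)
  then show ?thesis
    using False lex_less_iff_less by simp
qed (use assms prefixes_strict_prefix_iff_length strict_prefix_imp_less lex_less_iff_less in blast)

primrec min_length :: "nat list \<Rightarrow> mtrm \<Rightarrow> nat" where
  "min_length ls (MV i) = ls ! i"
| "min_length ls (MMeet s t) = min (min_length ls s) (min_length ls t)"

lemma meval_chain:
  assumes "\<forall>u\<in>set \<eta>s. prefix u w" "mvars s \<subseteq> {..<length \<eta>s}"
  shows "prefix (meval \<eta>s s) w \<and> length (meval \<eta>s s) = min_length (map length \<eta>s) s"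
  using assms(2)
proof (induction s)
  case (MMeet s t)
  then have s: "prefix (meval \<eta>s s) w" "length (meval \<eta>s s) = min_length (map length \<eta>s) s"
    and t: "prefix (meval \<eta>s t) w" "length (meval \<eta>s t) = min_length (map length \<eta>s) t"
    by auto
  show ?case
  proof (cases "length (meval \<eta>s s) \<le> length (meval \<eta>s t)")
    case True
    then have "meval \<eta>s (MMeet s t) = meval \<eta>s s"
      using prefix_length_prefix[OF s(1) t(1)] meet_eq_left by simp
    then show ?thesis using s t True by simp
  next
    case False
    then have "meval \<eta>s (MMeet s t) = meval \<eta>s t"
      using prefix_length_prefix[OF t(1) s(1)] meet_eq_right by simp
    then show ?thesis using s t False by simp
  qed
qed (use assms(1) in auto)

lemma qftp_eq_chains:
  assumes "\<forall>u\<in>set \<eta>s. prefix u w" "\<forall>u\<in>set \<nu>s. prefix u w'" "map length \<eta>s = map length \<nu>s"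
  shows "qftp_eq \<eta>s \<nu>s"
proof -
  have len: "length \<eta>s = length \<nu>s"
    using assms(3) map_eq_imp_length_eq by blast
  show ?thesis unfolding qftp_eq_def
  proof (intro conjI allI impI len)
    fix s t assume "mvars s \<union> mvars t \<subseteq> {..<length \<eta>s}"
    then have st: "mvars s \<subseteq> {..<length \<eta>s}" "mvars t \<subseteq> {..<length \<eta>s}"
      "mvars s \<subseteq> {..<length \<nu>s}" "mvars t \<subseteq> {..<length \<nu>s}"
      using len by auto
    note \<eta>s = meval_chain[OF assms(1) st(1)] meval_chain[OF assms(1) st(2)]
    note \<nu>s = meval_chain[OF assms(2) st(3)] meval_chain[OF assms(2) st(4)]
    show "meval \<eta>s s = meval \<eta>s t \<longleftrightarrow> meval \<nu>s s = meval \<nu>s t"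
      using \<eta>s \<nu>s assms(3) prefixes_eq_iff_length by metis
    show "strict_prefix (meval \<eta>s s) (meval \<eta>s t) \<longleftrightarrow> strict_prefix (meval \<nu>s s) (meval \<nu>s t)"
      using \<eta>s \<nu>s assms(3) prefixes_strict_prefix_iff_length by metis
    show "lex_less (meval \<eta>s s) (meval \<eta>s t) \<longleftrightarrow> lex_less (meval \<nu>s s) (meval \<nu>s t)"
      using \<eta>s \<nu>s assms(3) prefixes_lex_less_iff_length by metis
  qed
qed

text \<open>For an incomparable pair \<open>\<eta>, \<nu>\<close>, every \<open>L\<^sub>0\<close>-term evaluates to \<open>[\<eta>, \<nu>, \<eta> \<and> \<nu>] ! pair_index s\<close>.\<close>

primrec pair_index :: "mtrm \<Rightarrow> nat" where
  "pair_index (MV i) = i"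
| "pair_index (MMeet s t) = (if pair_index s = pair_index t then pair_index s else 2)"

lemma meval_incomparable_pair:
  assumes "\<not> prefix \<eta> \<nu>" "\<not> prefix \<nu> \<eta>" "mvars s \<subseteq> {..<2}"
  shows "pair_index s < 3 \<and> meval [\<eta>, \<nu>] s = [\<eta>, \<nu>, meet \<eta> \<nu>] ! pair_index s"
  using assms(3)
proof (induction s)
  case (MV i)
  then show ?case by (auto simp: less_2_cases_iff)
next
  case (MMeet s t)
  then have s: "pair_index s < 3" "meval [\<eta>, \<nu>] s = [\<eta>, \<nu>, meet \<eta> \<nu>] ! pair_index s"
    and t: "pair_index t < 3" "meval [\<eta>, \<nu>] t = [\<eta>, \<nu>, meet \<eta> \<nu>] ! pair_index t"
    by auto
  have "meet \<eta> (meet \<eta> \<nu>) = meet \<eta> \<nu>" "meet \<nu> (meet \<eta> \<nu>) = meet \<eta> \<nu>"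
    "meet (meet \<eta> \<nu>) \<eta> = meet \<eta> \<nu>" "meet (meet \<eta> \<nu>) \<nu> = meet \<eta> \<nu>"
    "meet \<nu> \<eta> = meet \<eta> \<nu>" "\<And>u. meet u u = u"
    by (simp_all add: meet_eq_left meet_eq_right prefix_meet1 prefix_meet2 meet_commute[of \<nu>])
  with s t show ?case
    by (auto simp: numeral_3_eq_3 less_Suc_eq)
qed

lemma incomparable_pair_relations:
  assumes "\<not> prefix \<eta> \<nu>" "\<not> prefix \<nu> \<eta>" "lex_less \<eta> \<nu>" "x < 3" "y < 3"
  defines "\<mu>s \<equiv> [\<eta>, \<nu>, meet \<eta> \<nu>]"
  shows "\<mu>s ! x = \<mu>s ! y \<longleftrightarrow> x = y"
    and "strict_prefix (\<mu>s ! x) (\<mu>s ! y) \<longleftrightarrow> x = 2 \<and> y \<noteq> 2"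
    and "lex_less (\<mu>s ! x) (\<mu>s ! y) \<longleftrightarrow> x = 2 \<and> y \<noteq> 2 \<or> x = 0 \<and> y = 1"
proof -
  let ?m = "meet \<eta> \<nu>"
  have ne: "\<eta> \<noteq> \<nu>" "?m \<noteq> \<eta>" "?m \<noteq> \<nu>"
    using assms(1,2) prefix_meet1[of \<eta> \<nu>] prefix_meet2[of \<eta> \<nu>] by auto
  have sp: "strict_prefix ?m \<eta>" "strict_prefix ?m \<nu>"
    using ne prefix_meet1[of \<eta> \<nu>] prefix_meet2[of \<eta> \<nu>] by (simp_all add: strict_prefix_def)
  have nsp: "\<not> strict_prefix \<eta> \<nu>" "\<not> strict_prefix \<nu> \<eta>" "\<not> strict_prefix \<eta> ?m" "\<not> strict_prefix \<nu> ?m"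
    using assms(1,2) prefix_meet1 prefix_meet2
    by (auto dest: prefix_order.less_imp_le intro: prefix_order.trans)
  have lt: "\<eta> < \<nu>" "?m < \<eta>" "?m < \<nu>"
    using assms(3) lex_less_iff_less sp strict_prefix_imp_less by auto
  have x: "x = 0 \<or> x = 1 \<or> x = 2" and y: "y = 0 \<or> y = 1 \<or> y = 2"
    using assms(4,5) by auto
  show "\<mu>s ! x = \<mu>s ! y \<longleftrightarrow> x = y"
    using x y ne by (auto simp: \<mu>s_def)
  show "strict_prefix (\<mu>s ! x) (\<mu>s ! y) \<longleftrightarrow> x = 2 \<and> y \<noteq> 2"
    using x y sp nsp by (auto simp: \<mu>s_def)
  show "lex_less (\<mu>s ! x) (\<mu>s ! y) \<longleftrightarrow> x = 2 \<and> y \<noteq> 2 \<or> x = 0 \<and> y = 1"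
    using x y lt by (auto simp: \<mu>s_def lex_less_iff_less)
qed

lemma qftp_eq_incomparable_pairs:
  assumes "\<not> prefix \<eta> \<nu>" "\<not> prefix \<nu> \<eta>" "lex_less \<eta> \<nu>"
    and "\<not> prefix \<eta>' \<nu>'" "\<not> prefix \<nu>' \<eta>'" "lex_less \<eta>' \<nu>'"
  shows "qftp_eq [\<eta>, \<nu>] [\<eta>', \<nu>']"
  unfolding qftp_eq_def
proof (intro conjI allI impI)
  fix s t assume "mvars s \<union> mvars t \<subseteq> {..<length [\<eta>, \<nu>]}"
  then have st: "mvars s \<subseteq> {..<2}" "mvars t \<subseteq> {..<2}" by auto
  note \<eta>\<nu> = meval_incomparable_pair[OF assms(1,2) st(1)] meval_incomparable_pair[OF assms(1,2) st(2)]
  note \<eta>\<nu>' = meval_incomparable_pair[OF assms(4,5) st(1)] meval_incomparable_pair[OF assms(4,5) st(2)]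
  note rel = incomparable_pair_relations[OF assms(1-3)] incomparable_pair_relations[OF assms(4-6)]
  show "meval [\<eta>, \<nu>] s = meval [\<eta>, \<nu>] t \<longleftrightarrow> meval [\<eta>', \<nu>'] s = meval [\<eta>', \<nu>'] t"
    using \<eta>\<nu> \<eta>\<nu>' rel by simp
  show "strict_prefix (meval [\<eta>, \<nu>] s) (meval [\<eta>, \<nu>] t) \<longleftrightarrow>
      strict_prefix (meval [\<eta>', \<nu>'] s) (meval [\<eta>', \<nu>'] t)"
    using \<eta>\<nu> \<eta>\<nu>' rel by simp
  show "lex_less (meval [\<eta>, \<nu>] s) (meval [\<eta>, \<nu>] t) \<longleftrightarrow> lex_less (meval [\<eta>', \<nu>'] s) (meval [\<eta>', \<nu>'] t)"
    using \<eta>\<nu> \<eta>\<nu>' rel by simp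
qed simp

section \<open>Transfer along a strongly indiscernible tree\<close>

lemma strongly_indiscernible_common_realization:
  assumes "strongly_indiscernible F R a" "\<forall>\<eta>. length (a \<eta>) = m" "fv \<psi> \<subseteq> {..<N + m}"
    and "qftp_eq \<eta>s \<nu>s" "length xs = N" "\<forall>\<eta>\<in>set \<eta>s. sat F R (penv xs (a \<eta>)) \<psi>"
  shows "\<exists>ys. length ys = N \<and> (\<forall>\<nu>\<in>set \<nu>s. sat F R (penv ys (a \<nu>)) \<psi>)"
proof -
  let ?\<theta> = "Conj_params N m (length \<eta>s) \<psi>"
  have "length \<nu>s = length \<eta>s"
    using assms(4) by (simp add: qftp_eq_def)
  have lengths: "\<forall>b\<in>set (map a \<mu>s). length b = m" for \<mu>s
    using assms(2) by simp
  have "sat F R (penv xs (concat (map a \<eta>s))) ?\<theta>"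
    using sat_Conj_params[OF assms(5) lengths[where \<mu>s = \<eta>s] assms(3)] assms(6) by simp
  moreover have "same_tp F R (concat (map a \<eta>s)) (concat (map a \<nu>s))"
    using assms(1,4) unfolding strongly_indiscernible_def by blast
  moreover have "fv ?\<theta> \<subseteq> {..<N + length (concat (map a \<eta>s))}"
    using fv_Conj_params[OF assms(3)] length_concat_const[OF lengths] by simp
  ultimately obtain ys where "length ys = N" "sat F R (penv ys (concat (map a \<nu>s))) ?\<theta>"
    using same_tp_realizable assms(5) by blast
  then show ?thesis
    using sat_Conj_params[OF _ lengths[where \<mu>s = \<nu>s] assms(3)] \<open>length \<nu>s = length \<eta>s\<close> by auto
qed

lemma strongly_indiscernible_branch_realization:
  assumes "strongly_indiscernible F R a" "\<forall>\<eta>. length (a \<eta>) = m" "fv \<psi> \<subseteq> {..<N + m}"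
    and "length xs = N" "\<forall>k. sat F R (penv xs (a (replicate k False))) \<psi>" "finite K"
  shows "\<exists>ys. length ys = N \<and> (\<forall>k\<in>K. sat F R (penv ys (a (map \<xi> [0..<k]))) \<psi>)"
proof -
  define ks where "ks = sorted_list_of_set K"
  define M where "M = Max (insert 0 K)"
  have "k \<le> M" if "k \<in> K" for k
    using that assms(6) by (simp add: M_def)
  then have "prefix (replicate k False) (replicate M False)" "prefix (map \<xi> [0..<k]) (map \<xi> [0..<M])"
    if "k \<in> K" for k
    using that take_is_prefix[of k "replicate M False"] take_is_prefix[of k "map \<xi> [0..<M]"]
    by (simp_all add: take_map min_absorb1)
  then have "qftp_eq (map (\<lambda>k. replicate k False) ks) (map (\<lambda>k. map \<xi> [0..<k]) ks)"
    by (intro qftp_eq_chains[where w = "replicate M False" and w' = "map \<xi> [0..<M]"])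
      (auto simp: ks_def assms(6))
  moreover have "\<forall>\<eta>\<in>set (map (\<lambda>k. replicate k False) ks). sat F R (penv xs (a \<eta>)) \<psi>"
    using assms(5) by simp
  ultimately obtain ys where
    "length ys = N" "\<forall>\<nu>\<in>set (map (\<lambda>k. map \<xi> [0..<k]) ks). sat F R (penv ys (a \<nu>)) \<psi>"
    using strongly_indiscernible_common_realization[OF assms(1-3) _ assms(4)] by blast
  then show ?thesis
    using assms(6) by (auto simp: ks_def)
qed

lemma strongly_indiscernible_incomparable_realization:
  assumes "strongly_indiscernible F R a" "\<forall>\<eta>. length (a \<eta>) = m" "fv \<psi> \<subseteq> {..<N + m}"
    and "\<not> prefix \<eta> \<nu>" "\<not> prefix \<nu> \<eta>"
    and "length xs = N" "sat F R (penv xs (a \<eta>)) \<psi>" "sat F R (penv xs (a \<nu>)) \<psi>"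
  shows "\<exists>ys. length ys = N \<and> sat F R (penv ys (a [False])) \<psi> \<and> sat F R (penv ys (a [True])) \<psi>"
proof -
  have "lex_less [False] [True]"
    by (simp add: lex_less_iff_less)
  then have "qftp_eq [\<eta>, \<nu>] [[False], [True]] \<or> qftp_eq [\<nu>, \<eta>] [[False], [True]]"
    using incomparable_lex_less_cases[OF assms(4,5)] qftp_eq_incomparable_pairs assms(4,5)
    by (metis Cons_prefix_Cons)
  moreover have "\<forall>\<mu>\<in>set [\<eta>, \<nu>]. sat F R (penv xs (a \<mu>)) \<psi>" "\<forall>\<mu>\<in>set [\<nu>, \<eta>]. sat F R (penv xs (a \<mu>)) \<psi>"
    using assms(7,8) by simp_all
  ultimately obtain ys where "length ys = N" "\<forall>\<mu>\<in>set [[False], [True]]. sat F R (penv ys (a \<mu>)) \<psi>"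
    using strongly_indiscernible_common_realization[OF assms(1-3) _ assms(6)] by blast
  then show ?thesis by auto
qed

section \<open>Tuples of distinct solutions\<close>

text \<open>In \<open>distinct_sols p n \<phi>\<close> the \<open>j\<close>-th of the \<open>p\<close> solutions of \<open>\<phi>\<close> occupies the
variables \<open>j * n ..< (j + 1) * n\<close>; the parameters follow from variable \<open>p * n\<close> on.\<close>

definition block_var :: "nat \<Rightarrow> nat \<Rightarrow> nat \<Rightarrow> nat \<Rightarrow> nat" where
  "block_var p n j i = (if i < n then j * n + i else i - n + p * n)"

definition tuples_differ :: "nat \<Rightarrow> nat \<Rightarrow> nat \<Rightarrow> ('f, 'r) fm" where
  "tuples_differ n j k = FNeg (Conj (map (\<lambda>i. FEq (Var (j * n + i)) (Var (k * n + i))) [0..<n]))"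

definition distinct_sols :: "nat \<Rightarrow> nat \<Rightarrow> ('f, 'r) fm \<Rightarrow> ('f, 'r) fm" where
  "distinct_sols p n \<phi> = FConj (Conj (map (\<lambda>j. rename_fm (block_var p n j) \<phi>) [0..<p]))
     (Conj [tuples_differ n j k. j \<leftarrow> [0..<p], k \<leftarrow> [0..<p], j \<noteq> k])"

lemma block_index_less:
  assumes "j < p" "i < n"
  shows "j * n + i < p * (n :: nat)"
proof -
  have "j * n + i < Suc j * n"
    using assms(2) by simp
  also have "\<dots> \<le> p * n"
    using assms(1) by (intro mult_le_mono1) simp
  finally show ?thesis .
qed

lemma inj_block_var:
  assumes "j < p"
  shows "inj (block_var p n j)"
proof (rule injI)
  fix x y assume "block_var p n j x = block_var p n j y"
  then show "x = y"
    using block_index_less[OF assms, of x n] block_index_less[OF assms, of y n]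
    by (auto simp: block_var_def split: if_splits)
qed

lemma sat_distinct_sols:
  assumes "\<forall>x\<in>set xss. length x = n" "length b = m" "fv \<phi> \<subseteq> {..<n + m}"
  shows "sat F R (penv (concat xss) b) (distinct_sols (length xss) n \<phi>) \<longleftrightarrow>
    distinct xss \<and> (\<forall>x\<in>set xss. sat F R (penv x b) \<phi>)"
proof -
  let ?p = "length xss" and ?e = "penv (concat xss) b"
  have len: "length (concat xss) = ?p * n"
    using length_concat_const[OF assms(1)] .
  have sols: "sat F R ?e (rename_fm (block_var ?p n j) \<phi>) \<longleftrightarrow> sat F R (penv (xss ! j) b) \<phi>"
    if "j < ?p" for j
    unfolding sat_rename_fm[OF inj_block_var[OF that]]
  proof (rule sat_cong, intro ballI)
    fix i assume "i \<in> fv \<phi>"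
    with assms(3) have "i < n + m" by auto
    moreover have "length (xss ! j) = n"
      using assms(1) that by simp
    ultimately show "(?e \<circ> block_var ?p n j) i = penv (xss ! j) b i"
      using block_index_less[OF that] nth_concat_const[OF assms(1) that] len
      by (cases "i < n") (auto simp: block_var_def penv_def)
  qed
  have differ: "sat F R ?e (tuples_differ n j k) \<longleftrightarrow> xss ! j \<noteq> xss ! k"
    if "j < ?p" "k < ?p" for j k
  proof -
    have "sat F R ?e (tuples_differ n j k) \<longleftrightarrow> \<not> (\<forall>i<n. xss ! j ! i = xss ! k ! i)"
      using block_index_less[OF that(1)] block_index_less[OF that(2)] len
        nth_concat_const[OF assms(1) that(1)] nth_concat_const[OF assms(1) that(2)]
      by (auto simp: tuples_differ_def penv_def)
    also have "\<dots> \<longleftrightarrow> xss ! j \<noteq> xss ! k"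
      using assms(1) that by (simp add: list_eq_iff_nth_eq)
    finally show ?thesis .
  qed
  have "sat F R ?e (distinct_sols ?p n \<phi>) \<longleftrightarrow>
      (\<forall>j<?p. sat F R ?e (rename_fm (block_var ?p n j) \<phi>)) \<and>
      (\<forall>j<?p. \<forall>k<?p. j \<noteq> k \<longrightarrow> sat F R ?e (tuples_differ n j k))"
    unfolding distinct_sols_def by auto
  also have "\<dots> \<longleftrightarrow> (\<forall>j<?p. sat F R (penv (xss ! j) b) \<phi>) \<and>
      (\<forall>j<?p. \<forall>k<?p. j \<noteq> k \<longrightarrow> xss ! j \<noteq> xss ! k)"
    using sols differ by simp
  also have "\<dots> \<longleftrightarrow> distinct xss \<and> (\<forall>x\<in>set xss. sat F R (penv x b) \<phi>)"
    by (auto simp: distinct_conv_nth all_set_conv_all_nth)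
  finally show ?thesis .
qed

lemma fv_distinct_sols:
  assumes "fv \<phi> \<subseteq> {..<n + m}"
  shows "fv (distinct_sols p n \<phi>) \<subseteq> {..<p * n + m}"
proof -
  have "block_var p n j i < p * n + m" if "j < p" "i < n + m" for j i
    using that block_index_less[OF that(1), of i n] by (auto simp: block_var_def)
  then have image_bound: "block_var p n j ` {..<n + m} \<subseteq> {..<p * n + m}" if "j < p" for j
    using that by auto
  have rename_bound: "fv (rename_fm (block_var p n j) \<phi>) \<subseteq> {..<p * n + m}" if "j < p" for j
  proof -
    have "fv (rename_fm (block_var p n j) \<phi>) \<subseteq> block_var p n j ` fv \<phi>"
      by (rule fv_rename_fm)
    also have "\<dots> \<subseteq> block_var p n j ` {..<n + m}"
      using assms by (rule image_mono)
    finally show ?thesis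
      using image_bound[OF that] by (rule order_trans)
  qed
  moreover have differ_bound: "fv (tuples_differ n j k :: ('f, 'r) fm) \<subseteq> {..<p * n + m}"
    if "j < p" "k < p" for j k
  proof -
    have "fv (tuples_differ n j k :: ('f, 'r) fm) = (\<lambda>i. j * n + i) ` {..<n} \<union> (\<lambda>i. k * n + i) ` {..<n}"
      by (auto simp: tuples_differ_def)
    then show ?thesis
      using block_index_less[OF that(1), of _ n] block_index_less[OF that(2), of _ n]
      by (auto intro!: trans_less_add1)
  qed
  show ?thesis
    unfolding distinct_sols_def fv.simps fv_Conj
  proof (intro Un_least UN_least)
    fix \<chi> assume "\<chi> \<in> set (map (\<lambda>j. rename_fm (block_var p n j) \<phi>) [0..<p])"
    then obtain j where "j < p" "\<chi> = rename_fm (block_var p n j) \<phi>"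
      by auto
    then show "fv \<chi> \<subseteq> {..<p * n + m}"
      using rename_bound by simp
  next
    fix \<chi> assume "\<chi> \<in> set [tuples_differ n j k. j \<leftarrow> [0..<p], k \<leftarrow> [0..<p], j \<noteq> k]"
    then obtain j k where "j < p" "k < p" "\<chi> = tuples_differ n j k"
      by (auto split: if_splits)
    then show "fv \<chi> \<subseteq> {..<p * n + m}"
      using differ_bound by simp
  qed
qed

lemma distinct_sols_realizable_if_infinite:
  assumes "infinite {x. length x = n \<and> (\<forall>i. sat F R (penv x (c i)) \<phi>)}"
    and "\<forall>i. length (c i) = m" "fv \<phi> \<subseteq> {..<n + m}"
  shows "\<exists>xs. length xs = p * n \<and> (\<forall>i. sat F R (penv xs (c i)) (distinct_sols p n \<phi>))"
proof -
  obtain X where X: "X \<subseteq> {x. length x = n \<and> (\<forall>i. sat F R (penv x (c i)) \<phi>)}" "finite X" "card X = p"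
    using infinite_arbitrarily_large[OF assms(1)] by blast
  obtain xss where xss: "set xss = X" "distinct xss"
    using finite_distinct_list[OF X(2)] by blast
  have p: "length xss = p"
    using distinct_card[OF xss(2)] xss(1) X(3) by simp
  have lengths: "\<forall>x\<in>set xss. length x = n"
    using X(1) xss(1) by blast
  have "sat F R (penv (concat xss) (c i)) (distinct_sols p n \<phi>)" for i
  proof -
    have "distinct xss \<and> (\<forall>x\<in>set xss. sat F R (penv x (c i)) \<phi>)"
      using xss X(1) by blast
    then show ?thesis
      using sat_distinct_sols[OF lengths _ assms(3)] assms(2) p by blast
  qed
  moreover have "length (concat xss) = p * n"
    using length_concat_const[OF lengths] p by simp
  ultimately show ?thesis by blast
qed

lemma distinct_sols_unrealizable_if_card_less:
  assumes "finite {x. length x = n \<and> (\<forall>i. sat F R (penv x (c i)) \<phi>)}"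
    and "\<forall>i. length (c i) = m" "fv \<phi> \<subseteq> {..<n + m}"
    and "card {x. length x = n \<and> (\<forall>i. sat F R (penv x (c i)) \<phi>)} < p"
  shows "\<not> (\<exists>xs. length xs = p * n \<and> (\<forall>i. sat F R (penv xs (c i)) (distinct_sols p n \<phi>)))"
proof
  assume "\<exists>xs. length xs = p * n \<and> (\<forall>i. sat F R (penv xs (c i)) (distinct_sols p n \<phi>))"
  then obtain xss where xss: "length xss = p" "\<forall>x\<in>set xss. length x = n"
    and sat: "\<forall>i. sat F R (penv (concat xss) (c i)) (distinct_sols p n \<phi>)"
    using ex_concat_blocks by metis
  then have sols: "distinct xss \<and> (\<forall>x\<in>set xss. sat F R (penv x (c i)) \<phi>)" for i
    using sat_distinct_sols[OF xss(2) _ assms(3)] assms(2) by auto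
  then have "set xss \<subseteq> {x. length x = n \<and> (\<forall>i. sat F R (penv x (c i)) \<phi>)}"
    using xss(2) by blast
  then have "card (set xss) < p"
    using card_mono[OF assms(1)] assms(4) by (meson le_less_trans)
  moreover have "card (set xss) = p"
    unfolding xss(1)[symmetric] using sols by (blast intro: distinct_card)
  ultimately show False
    by simp
qed

theorem proposition3p1:
  fixes F :: "'f \<Rightarrow> 'a list \<Rightarrow> 'a" and R :: "'r \<Rightarrow> 'a list \<Rightarrow> bool"
    and \<phi> :: "('f, 'r) fm" and n m :: nat and a :: "bool list \<Rightarrow> 'a list"
  assumes "saturated F R"
    and "fv \<phi> \<subseteq> {..<n + m}"
    and "\<forall>\<eta>. length (a \<eta>) = m"
    and "strongly_indiscernible F R a"
    and "infinite {xs. length xs = n \<and> (\<forall>k. sat F R (penv xs (a (replicate k False))) \<phi>)}"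
    and "finite {xs. length xs = n \<and> sat F R (penv xs (a [False])) \<phi>
                                   \<and> sat F R (penv xs (a [True])) \<phi>}"
  shows "has_SOP2 F R"
proof -
  let ?S = "{xs. length xs = n \<and> (\<forall>b. sat F R (penv xs (a [b])) \<phi>)}"
  define p where "p = Suc (card ?S)"
  define \<psi> where "\<psi> = distinct_sols p n \<phi>"
  have fv_\<psi>: "fv \<psi> \<subseteq> {..<p * n + m}"
    unfolding \<psi>_def using assms(2) by (rule fv_distinct_sols)
  obtain xs where "length xs = p * n" "\<forall>k. sat F R (penv xs (a (replicate k False))) \<psi>"
    using distinct_sols_realizable_if_infinite[OF assms(5) _ assms(2)] assms(3) unfolding \<psi>_def by blast
  then have "\<exists>ys. length ys = p * n \<and> (\<forall>k\<in>K. sat F R (penv ys (a (map \<xi> [0..<k]))) \<psi>)"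
    if "finite K" for \<xi> K
    using strongly_indiscernible_branch_realization[OF assms(4,3) fv_\<psi>] that by blast
  moreover have "\<not> (\<exists>xs. length xs = p * n \<and> sat F R (penv xs (a \<eta>)) \<psi> \<and> sat F R (penv xs (a \<nu>)) \<psi>)"
    if "\<not> prefix \<eta> \<nu>" "\<not> prefix \<nu> \<eta>" for \<eta> \<nu>
  proof -
    have "finite ?S"
      using assms(6) by (simp add: all_bool_eq conj_commute)
    then have "\<not> (\<exists>ys. length ys = p * n \<and> (\<forall>b. sat F R (penv ys (a [b])) \<psi>))"
      unfolding \<psi>_def p_def using assms(2,3) by (intro distinct_sols_unrealizable_if_card_less) auto
    then show ?thesis
      using strongly_indiscernible_incomparable_realization[OF assms(4,3) fv_\<psi> that]
      by (auto simp: all_bool_eq)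
  qed
  ultimately show ?thesis
    unfolding has_SOP2_def using fv_\<psi> assms(3) by blast
qed

end
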